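(* In the setting of the context, let $x_0=x_0(0)$, $x_1=x_1(0)$ and $r_0=1/x_1$. Then, for $|x|\le 1$, $$\varphi_0(x)=\frac{\pi_{0,0}}{1-r_0x},$$ and for $j=1,2,\ldots$ and $|x|\le1$, $x\neq x_0$, $$\varphi_j(x)=\frac{a_j}{x-x_1}-\frac{q\varphi_{j-1}(x_0)(x+x_0)}{\bar q(x-x_1)}-\frac{q(px+\bar p)(\bar\mu_hx+\mu_h)}{p\bar q\bar\mu_h(x-x_1)}\cdot\frac{\varphi_{j-1}(x)-\varphi_{j-1}(x_0)}{x-x_0},$$ where $$a_j=\frac{[\bar p\bar q(\mu_l-\mu_h)-\bar pq\mu_l]\pi_{0,j}-\bar p\bar q\mu_l\pi_{0,j+1}+\bar pq(\mu_l-\mu_h)\pi_{0,j-1}-q(\bar p\bar\mu_h+p\mu_h)\varphi_{j-1}(x_0)}{p\bar q\bar\mu_h}.$$ Moreover $\pi_{0,0}=\frac{1-\rho}{\bar p\bar q}$.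
   Context: Fix $p,q,\mu_h,\mu_l\in(0,1)$ with $p+q+\mu_h+\mu_l=1$. For real $x$ write $\bar x=1-x$; let $\rho_h=p/\mu_h$, $\rho_l=q/\mu_l$, $\rho=\rho_h+\rho_l$, and assume $\rho<1$. Let $(Q_1(n),Q_2(n))_{n\ge0}$ be the discrete-time Markov chain on $\mathbb{Z}_{\ge0}^2$ (numbers of high- and low-priority customers in a discrete-time preemptive priority queue, early arrival system) whose one-step transition probabilities from $(i,j)$ to $(i+k,j+l)$ are as follows (unlisted transitions have probability $0$). If $i\ge1$, $j\ge0$: $(k,l)=(1,0)$: $p\bar q\bar\mu_h$; $(1,1)$: $pq\bar\mu_h$; $(0,1)$: $pq\mu_h+\bar pq\bar\mu_h$; $(-1,1)$: $\bar pq\mu_h$; $(-1,0)$: $\bar p\bar q\mu_h$; $(0,0)$: $\bar p\bar q\bar\mu_h+p\bar q\mu_h$. If $i=0$, $j\ge1$: $(1,0)$: $p\bar q\bar\mu_h$; $(1,1)$: $pq\bar\mu_h$; $(0,1)$: $pq\mu_h+\bar pq\bar\mu_l$; $(0,-1)$: $\bar p\bar q\mu_l$; $(0,0)$: $\bar p\bar q\bar\mu_l+p\bar q\mu_h+\bar pq\mu_l$. If $(i,j)=(0,0)$: $(1,0)$: $p\bar q\bar\mu_h$; $(1,1)$: $pq\bar\mu_h$; $(0,1)$: $pq\mu_h+\bar pq\bar\mu_l$; $(0,0)$: $\bar p\bar q+p\bar q\mu_h+\bar pq\mu_l$. Let $(\pi_{i,j})_{i,j\ge0}$ be its stationary distribution,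 and let $\varphi_j(x)=\sum_{i\ge0}\pi_{i,j}x^i$ for $j\ge0$. Define $\Delta(y)=(p\mu_h-\bar p\bar\mu_h)^2(qy+\bar q)^2-2(p\mu_h+\bar p\bar\mu_h)(qy+\bar q)+1$, and $x_0(y)=\frac{1-(p\mu_h+\bar p\bar\mu_h)(qy+\bar q)-\sqrt{\Delta(y)}}{2p\bar\mu_h(qy+\bar q)}$, $x_1(y)=\frac{1-(p\mu_h+\bar p\bar\mu_h)(qy+\bar q)+\sqrt{\Delta(y)}}{2p\bar\mu_h(qy+\bar q)}$, where the square root is the positive one for real $y$ with $\Delta(y)>0$ (in particular at $y=0$). *)

theory Defs
  imports "HOL-Analysis.Analysis"
begin

text \<open>One-step transition probability of the discrete-time preemptive priority queue
  (early arrival system) from state (i,j) to state (i',j').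
  Parameters: p, q arrival probabilities, mh, ml service probabilities.\<close>

definition prio_trans :: "real \<Rightarrow> real \<Rightarrow> real \<Rightarrow> real \<Rightarrow> nat \<times> nat \<Rightarrow> nat \<times> nat \<Rightarrow> real" where
  "prio_trans p q mh ml s t =
    (let i = fst s; j = snd s;
         k = int (fst t) - int i; l = int (snd t) - int j;
         pb = 1 - p; qb = 1 - q; mhb = 1 - mh; mlb = 1 - ml in
     if i \<ge> 1 then
       (if (k, l) = (1, 0) then p * qb * mhb
        else if (k, l) = (1, 1) then p * q * mhb
        else if (k, l) = (0, 1) then p * q * mh + pb * q * mhb
        else if (k, l) = (-1, 1) then pb * q * mh
        else if (k, l) = (-1, 0) then pb * qb * mh
        else if (k, l) = (0, 0) then pb * qb * mhb + p * qb * mh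
        else 0)
     else if j \<ge> 1 then
       (if (k, l) = (1, 0) then p * qb * mhb
        else if (k, l) = (1, 1) then p * q * mhb
        else if (k, l) = (0, 1) then p * q * mh + pb * q * mlb
        else if (k, l) = (0, -1) then pb * qb * ml
        else if (k, l) = (0, 0) then pb * qb * mlb + p * qb * mh + pb * q * ml
        else 0)
     else
       (if (k, l) = (1, 0) then p * qb * mhb
        else if (k, l) = (1, 1) then p * q * mhb
        else if (k, l) = (0, 1) then p * q * mh + pb * q * mlb
        else if (k, l) = (0, 0) then pb * qb + p * qb * mh + pb * q * ml
        else 0))"

definition is_stationary :: "(nat \<times> nat \<Rightarrow> nat \<times> nat \<Rightarrow> real) \<Rightarrow> (nat \<times> nat \<Rightarrow> real) \<Rightarrow> bool" where
  "is_stationary P \<pi> \<longleftrightarrow>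
     (\<forall>s. \<pi> s \<ge> 0) \<and> (\<pi> has_sum 1) UNIV \<and>
     (\<forall>t. ((\<lambda>s. \<pi> s * P s t) has_sum \<pi> t) UNIV)"

definition gen_phi :: "(nat \<times> nat \<Rightarrow> real) \<Rightarrow> nat \<Rightarrow> complex \<Rightarrow> complex" where
  "gen_phi \<pi> j x = (\<Sum>i. complex_of_real (\<pi> (i, j)) * x ^ i)"

definition prio_Delta :: "real \<Rightarrow> real \<Rightarrow> real \<Rightarrow> real \<Rightarrow> real" where
  "prio_Delta p q mh y =
     (p * mh - (1 - p) * (1 - mh))^2 * (q * y + (1 - q))^2
     - 2 * (p * mh + (1 - p) * (1 - mh)) * (q * y + (1 - q)) + 1"

definition prio_x0 :: "real \<Rightarrow> real \<Rightarrow> real \<Rightarrow> real \<Rightarrow> real" where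
  "prio_x0 p q mh y =
     (1 - (p * mh + (1 - p) * (1 - mh)) * (q * y + (1 - q)) - sqrt (prio_Delta p q mh y))
     / (2 * p * (1 - mh) * (q * y + (1 - q)))"

definition prio_x1 :: "real \<Rightarrow> real \<Rightarrow> real \<Rightarrow> real \<Rightarrow> real" where
  "prio_x1 p q mh y =
     (1 - (p * mh + (1 - p) * (1 - mh)) * (q * y + (1 - q)) + sqrt (prio_Delta p q mh y))
     / (2 * p * (1 - mh) * (q * y + (1 - q)))"

end

theory Submission
  imports Defs
begin

text \<open>
  The balance equations of \<pi> relate consecutive rows \<pi>(-, j). On row 0 they form a second-order
  linear recurrence whose characteristic roots are 1/x1 < 1 < 1/x0; as \<pi> is summable the growing
  mode is absent, so \<pi>(n, 0) = \<pi>(0, 0) r0^n and \<phi>0 is a geometric series. For j \<ge> 1, multiplying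
  by x^i and summing gives the kernel equation K(x) \<phi>_j(x) = - A(x) \<phi>_(j-1)(x) + l0 + l1 x with
  K(x) = p (1 - q) (1 - \<mu>h) (x - x0) (x - x1) and l0, l1 built from the boundary values \<pi>(0, -).
  Evaluating at the root x0, which lies in the unit disc, eliminates the unknown l0; dividing by
  x - x0 then gives \<phi>_j. For \<pi>(0, 0): the marginal law of the high-priority queue is geometric
  with ratio p (1 - \<mu>h) / ((1 - p) \<mu>h), and the net probability flow between the low-priority
  levels j and j + 1 does not depend on j and tends to 0, hence vanishes; summing it over j
  determines \<pi>(0, 0).
\<close>

lemma vieta_from_quadratic_formula:
  fixes a b m r x y :: real
  assumes "a \<noteq> 0" "r\<^sup>2 = m\<^sup>2 - 4*a*b" "2*a*x = m - r" "2*a*y = m + r"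
  shows "a*(x + y) = m" "a*x*y = b"
proof -
  have "2*(a*(x + y)) = 2*m" using assms(3,4) by (simp add: algebra_simps)
  then show "a*(x + y) = m" by simp
  have "4*a*(a*x*y) = (2*a*x)*(2*a*y)" by algebra
  also have "\<dots> = 4*a*b" unfolding assms(3,4) using assms(2) by algebra
  finally show "a*x*y = b" using assms(1) by simp
qed

lemma quadratic_formula_roots_separated:
  fixes a m r x y :: real
  assumes "0 < a" "\<bar>2*a - m\<bar> < r" "r < m" "2*a*x = m - r" "2*a*y = m + r"
  shows "0 < x" "x < 1" "1 < y"
proof -
  have x: "x = (m - r) / (2*a)" and y: "y = (m + r) / (2*a)"
    using assms(1,4,5) by (simp_all add: field_simps)
  show "0 < x" "x < 1" "1 < y"
    unfolding x y using assms(1-3) by (simp_all add: divide_less_eq less_divide_eq abs_less_iff)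
qed

lemma power_solves_linear_recurrence:
  fixes a b m t :: "'a::comm_ring_1"
  assumes "b*t\<^sup>2 - m*t + a = 0"
  shows "b*t^Suc (Suc n) = m*t^Suc n - a*t^n"
proof -
  have "b*t^Suc (Suc n) - m*t^Suc n + a*t^n = t^n*(b*t\<^sup>2 - m*t + a)"
    by (simp add: algebra_simps power2_eq_square)
  with assms show ?thesis by (simp add: algebra_simps)
qed

lemma linear_recurrence_vanishing_at_0:
  fixes v :: "nat \<Rightarrow> 'a::idom"
  assumes rec: "\<And>n. b * v (Suc (Suc n)) = m * v (Suc n) - a * v n" and "v 0 = 0"
    and z: "b*z\<^sup>2 - m*z + a = 0" and w: "b*w\<^sup>2 - m*w + a = 0" and "b \<noteq> 0"
  shows "v n * (w - z) = v 1 * (w^n - z^n)"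
proof -
  have "v n * (w - z) = v 1 * (w^n - z^n) \<and> v (Suc n) * (w - z) = v 1 * (w^Suc n - z^Suc n)"
  proof (induction n)
    case 0
    then show ?case using \<open>v 0 = 0\<close> by simp
  next
    case (Suc n)
    have "b * (v (Suc (Suc n)) * (w - z)) = m * (v (Suc n) * (w - z)) - a * (v n * (w - z))"
      by (subst mult.assoc[symmetric], subst rec) (simp add: algebra_simps)
    also have "\<dots> = m * (v 1 * (w^Suc n - z^Suc n)) - a * (v 1 * (w^n - z^n))"
      using Suc.IH by simp
    also have "\<dots> = v 1 * ((m*w^Suc n - a*w^n) - (m*z^Suc n - a*z^n))"
      by (simp add: algebra_simps)
    also have "\<dots> = b * (v 1 * (w^Suc (Suc n) - z^Suc (Suc n)))"
      unfolding power_solves_linear_recurrence[OF z, symmetric] power_solves_linear_recurrence[OF w, symmetric]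
      by (simp add: algebra_simps)
    finally show ?case using Suc.IH \<open>b \<noteq> 0\<close> by simp
  qed
  then show ?thesis ..
qed

lemma decaying_solution_of_linear_recurrence:
  fixes u :: "nat \<Rightarrow> real"
  assumes rec: "\<And>n. b * u (Suc (Suc n)) = m * u (Suc n) - a * u n"
    and z: "b*z\<^sup>2 - m*z + a = 0" and w: "b*w\<^sup>2 - m*w + a = 0"
    and "b \<noteq> 0" "\<bar>z\<bar> < 1" "1 < w" and lim: "u \<longlonglongrightarrow> 0"
  shows "u n = u 0 * z^n"
proof -
  define v where "v n = u n - u 0 * z^n" for n
  have v_rec: "b * v (Suc (Suc n)) = m * v (Suc n) - a * v n" for n
  proof -
    have "b * v (Suc (Suc n)) = b * u (Suc (Suc n)) - u 0 * (b*z^Suc (Suc n))"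
      by (simp add: v_def algebra_simps)
    also have "\<dots> = m * v (Suc n) - a * v n"
      unfolding rec power_solves_linear_recurrence[OF z] by (simp add: v_def algebra_simps)
    finally show ?thesis .
  qed
  have "v 0 = 0" by (simp add: v_def)
  note closed = linear_recurrence_vanishing_at_0[of b v m a, OF v_rec this z w \<open>b \<noteq> 0\<close>]
  \<comment> \<open>Divided by w^n, the closed form tends to 0 on the left and to v 1 on the right.\<close>
  have "(\<lambda>n. v n * (w - z) / w^n) \<longlonglongrightarrow> 0"
  proof -
    have "(\<lambda>n. u 0 * z^n) \<longlonglongrightarrow> 0"
      using LIMSEQ_power_zero[of z] \<open>\<bar>z\<bar> < 1\<close> tendsto_mult_right_zero by auto
    then have v_lim: "v \<longlonglongrightarrow> 0" using tendsto_diff[OF lim] unfolding v_def[abs_def] by fastforce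
    have "(\<lambda>n. (1/w)^n) \<longlonglongrightarrow> 0" using \<open>1 < w\<close> by (intro LIMSEQ_power_zero) simp
    from tendsto_mult[OF tendsto_mult[OF v_lim tendsto_const] this]
    have "(\<lambda>n. v n * (w - z) * (1/w)^n) \<longlonglongrightarrow> 0" by simp
    moreover have "v n * (w - z) * (1/w)^n = v n * (w - z) / w^n" for n
      by (simp add: power_one_over)
    ultimately show ?thesis by simp
  qed
  moreover have "(\<lambda>n. v n * (w - z) / w^n) \<longlonglongrightarrow> v 1 * (1 - 0)"
  proof -
    have "norm (z/w) < 1" using \<open>\<bar>z\<bar> < 1\<close> \<open>1 < w\<close> by (simp add: abs_divide divide_less_eq)
    then have "(\<lambda>n. v 1 * (1 - (z/w)^n)) \<longlonglongrightarrow> v 1 * (1 - 0)"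
      by (intro tendsto_mult tendsto_diff tendsto_const LIMSEQ_power_zero)
    moreover have "v n * (w - z) / w^n = v 1 * (1 - (z/w)^n)" for n
    proof -
      have "v n * (w - z) / w^n = v 1 * (w^n / w^n - z^n / w^n)"
        by (simp only: closed diff_divide_distrib times_divide_eq_right[symmetric])
      then show ?thesis using \<open>1 < w\<close> by (simp add: power_divide)
    qed
    ultimately show ?thesis by simp
  qed
  ultimately have "v 1 = 0" by (simp add: LIMSEQ_unique)
  then have "v n = 0" using closed[of n] \<open>1 < w\<close> \<open>\<bar>z\<bar> < 1\<close> by auto
  then show ?thesis by (simp add: v_def)
qed

lemma nonneg_has_sum_marginal:
  fixes f :: "nat \<times> nat \<Rightarrow> real"
  assumes nonneg: "\<And>s. 0 \<le> f s" and sum: "(f has_sum S) UNIV"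
  shows "summable (\<lambda>j. f (i, j))" and "(\<lambda>i. \<Sum>j. f (i, j)) sums S"
proof -
  have "(\<lambda>(i, j). f (i, j)) summable_on UNIV \<times> UNIV"
    using sum unfolding summable_on_def by auto
  from summable_on_SigmaD1[OF this]
  have "(\<lambda>j. f (i, j)) summable_on UNIV" for i by simp
  then show summable: "summable (\<lambda>j. f (i, j))" for i
    using summable_on_UNIV_nonneg_real_iff[of "\<lambda>j. f (i, j)"] nonneg by simp
  have "(f has_sum S) (Sigma UNIV (\<lambda>_. UNIV))" using sum by simp
  then have "((\<lambda>i. \<Sum>j. f (i, j)) has_sum S) UNIV"
    by (rule has_sum_Sigma')
       (rule sums_nonneg_imp_has_sum[OF summable_sums[OF summable]], rule nonneg)
  then show "(\<lambda>i. \<Sum>j. f (i, j)) sums S" by (rule has_sum_imp_sums)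
qed

lemma power_series_two_step_identity:
  fixes x :: "'a::real_normed_field" and c d :: "nat \<Rightarrow> real"
  assumes F: "(\<lambda>i. of_real (c i) * x^i) sums F" and G: "(\<lambda>i. of_real (d i) * x^i) sums G"
    and rec: "\<And>i. c (Suc i) = \<alpha>*c i + \<beta>*d i + \<gamma>*d (Suc i) + \<delta>*d (Suc (Suc i))
                        + \<epsilon>*c (Suc (Suc i)) + \<kappa>*c (Suc i)"
  shows "x*(F - of_real (c 0)) = of_real \<alpha>*x\<^sup>2*F + of_real \<beta>*x\<^sup>2*G
     + of_real \<gamma>*x*(G - of_real (d 0)) + of_real \<delta>*(G - of_real (d 0) - of_real (d 1)*x)
     + of_real \<epsilon>*(F - of_real (c 0) - of_real (c 1)*x) + of_real \<kappa>*x*(F - of_real (c 0))"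
proof -
  define f where "f i = of_real (c i) * x^i" for i
  define g where "g i = of_real (d i) * x^i" for i
  have F0: "f sums F" and G0: "g sums G" using F G by (simp_all add: f_def[abs_def] g_def[abs_def])
  have F1: "(\<lambda>i. f (Suc i)) sums (F - f 0)" and G1: "(\<lambda>i. g (Suc i)) sums (G - g 0)"
    using F0 G0 by (simp_all add: sums_Suc_iff)
  have F2: "(\<lambda>i. f (Suc (Suc i))) sums (F - f 0 - f 1)"
    and G2: "(\<lambda>i. g (Suc (Suc i))) sums (G - g 0 - g 1)"
    using F1 G1 by (simp_all add: sums_Suc_iff[where f="\<lambda>i. f (Suc i)"]
        sums_Suc_iff[where f="\<lambda>i. g (Suc i)"])
  have "x * f (Suc i) = of_real \<alpha>*x\<^sup>2*f i + of_real \<beta>*x\<^sup>2*g i + of_real \<gamma>*x*g (Suc i)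
     + of_real \<delta>*g (Suc (Suc i)) + of_real \<epsilon>*f (Suc (Suc i)) + of_real \<kappa>*x*f (Suc i)" for i
  proof -
    have "x * f (Suc i) = of_real (c (Suc i)) * x^Suc (Suc i)" by (simp add: f_def)
    also have "\<dots> = of_real (\<alpha>*c i + \<beta>*d i + \<gamma>*d (Suc i) + \<delta>*d (Suc (Suc i))
                        + \<epsilon>*c (Suc (Suc i)) + \<kappa>*c (Suc i)) * x^Suc (Suc i)"
      by (subst rec) (rule refl)
    finally show ?thesis by (simp add: f_def g_def algebra_simps power2_eq_square)
  qed
  then have "(\<lambda>i. x * f (Suc i)) sums (of_real \<alpha>*x\<^sup>2*F + of_real \<beta>*x\<^sup>2*G
     + of_real \<gamma>*x*(G - g 0) + of_real \<delta>*(G - g 0 - g 1)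
     + of_real \<epsilon>*(F - f 0 - f 1) + of_real \<kappa>*x*(F - f 0))"
    by (simp only:) (intro sums_add sums_mult F0 G0 F1 G1 F2 G2)
  with sums_mult[OF F1, of x] show ?thesis by (simp add: sums_unique2 f_def g_def)
qed

lemma power_series_kernel_equation:
  fixes x :: "'a::real_normed_field" and c d :: "nat \<Rightarrow> real"
  assumes F: "(\<lambda>i. of_real (c i) * x^i) sums F" and G: "(\<lambda>i. of_real (d i) * x^i) sums G"
    and interior: "\<And>i. c (Suc i) = \<alpha>*c i + \<beta>*d i + \<gamma>*d (Suc i) + \<delta>*d (Suc (Suc i))
                             + \<epsilon>*c (Suc (Suc i)) + \<kappa>*c (Suc i)"
    and boundary: "c 0 = g*d 0 + \<delta>*d 1 + \<epsilon>*c 1 + k*c 0 + b*e"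
  shows "(of_real \<alpha> * x\<^sup>2 - of_real (1 - \<kappa>) * x + of_real \<epsilon>) * F
       = - (of_real \<beta> * x\<^sup>2 + of_real \<gamma> * x + of_real \<delta>) * G
         + of_real (\<delta> * d 0 + \<epsilon> * c 0) + of_real ((\<gamma> - g) * d 0 + (\<kappa> - k) * c 0 - b * e) * x"
proof -
  have "(of_real (c 0) :: 'a) = of_real g * of_real (d 0) + of_real \<delta> * of_real (d 1)
      + of_real \<epsilon> * of_real (c 1) + of_real k * of_real (c 0) + of_real b * of_real e"
    by (subst boundary) (simp only: of_real_add of_real_mult)
  with power_series_two_step_identity[OF F G interior] show ?thesis
    by (simp only: of_real_add of_real_mult of_real_diff of_real_1) algebra
qed

lemma kernel_root_elimination:
  fixes \<alpha> \<beta> \<gamma> \<delta> l0 l1 x x0 x1 F G G0 :: "'a::field"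
  assumes K: "\<alpha>*(x - x0)*(x - x1) * F = - (\<beta>*x\<^sup>2 + \<gamma>*x + \<delta>) * G + l0 + l1*x"
    and K0: "0 = - (\<beta>*x0\<^sup>2 + \<gamma>*x0 + \<delta>) * G0 + l0 + l1*x0"
    and "\<alpha> \<noteq> 0" "x \<noteq> x0" "x \<noteq> x1"
  shows "F = (l1 - \<gamma>*G0) / \<alpha> / (x - x1) - \<beta> / \<alpha> * G0 * (x + x0) / (x - x1)
             - (\<beta>*x\<^sup>2 + \<gamma>*x + \<delta>) / (\<alpha>*(x - x1)) * ((G - G0) / (x - x0))"
proof -
  define U where "U = (G - G0) / (x - x0)"
  have "G - G0 = U * (x - x0)" using \<open>x \<noteq> x0\<close> by (simp add: U_def)
  with K K0 have "\<alpha>*(x - x1) * F * (x - x0)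
      = ((l1 - \<gamma>*G0) - \<beta>*G0*(x + x0) - (\<beta>*x\<^sup>2 + \<gamma>*x + \<delta>) * U) * (x - x0)"
    by algebra
  then have "\<alpha>*(x - x1) * F = (l1 - \<gamma>*G0) - \<beta>*G0*(x + x0) - (\<beta>*x\<^sup>2 + \<gamma>*x + \<delta>) * U"
    using \<open>x \<noteq> x0\<close> by simp
  then have "F = ((l1 - \<gamma>*G0) - \<beta>*G0*(x + x0) - (\<beta>*x\<^sup>2 + \<gamma>*x + \<delta>) * U) / (\<alpha>*(x - x1))"
    using assms(3,5) by (simp add: eq_divide_eq mult.commute)
  then show ?thesis unfolding U_def by (simp add: diff_divide_distrib)
qed

lemma prio_trans_nonzero_imp_predecessor:
  assumes "prio_trans p q mh ml s (i, j) \<noteq> 0"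
  shows "s \<in> {(i - 1, j), (i - 1, j - 1), (i, j - 1), (Suc i, j - 1), (Suc i, j), (i, j), (i, Suc j)}"
  using assms by (cases s) (auto simp: prio_trans_def Let_def split: if_splits)

text \<open>Truncated subtraction makes some of the listed predecessors coincide when i = 0 or j = 0.\<close>

lemma stationary_balance:
  assumes "is_stationary (prio_trans p q mh ml) \<pi>"
  shows "\<pi> (i, j) = (\<Sum>s\<in>{(i - 1, j), (i - 1, j - 1), (i, j - 1), (Suc i, j - 1), (Suc i, j), (i, j), (i, Suc j)}.
                       \<pi> s * prio_trans p q mh ml s (i, j))" (is "_ = sum ?g ?N")
proof -
  have "(?g has_sum \<pi> (i, j)) UNIV" using assms unfolding is_stationary_def by blast
  then have "(?g has_sum \<pi> (i, j)) ?N"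
    by (subst (asm) has_sum_cong_neutral[where T="?N" and g="?g"])
       (use prio_trans_nonzero_imp_predecessor[of p q mh ml _ i j] in auto)
  then show ?thesis using has_sum_finite[of ?N ?g] has_sum_unique by blast
qed

locale prio_queue =
  fixes p q mh ml :: real and \<pi> :: "nat \<times> nat \<Rightarrow> real"
  assumes p_pos: "0 < p" and p_lt_1: "p < 1" and q_pos: "0 < q" and q_lt_1: "q < 1"
    and mh_pos: "0 < mh" and mh_lt_1: "mh < 1" and ml_pos: "0 < ml"
    and load_lt_1: "p / mh + q / ml < 1"
    and stationary: "is_stationary (prio_trans p q mh ml) \<pi>"
begin

text \<open>Probabilities of the moves (k, l), with m1 for -1: P in the interior, B on the boundary i = 0.\<close>

abbreviation "P10 \<equiv> p*(1-q)*(1-mh)"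
abbreviation "P11 \<equiv> p*q*(1-mh)"
abbreviation "P01 \<equiv> p*q*mh + (1-p)*q*(1-mh)"
abbreviation "Pm11 \<equiv> (1-p)*q*mh"
abbreviation "Pm10 \<equiv> (1-p)*(1-q)*mh"
abbreviation "P00 \<equiv> (1-p)*(1-q)*(1-mh) + p*(1-q)*mh"
abbreviation "B01 \<equiv> p*q*mh + (1-p)*q*(1-ml)"
abbreviation "B0m1 \<equiv> (1-p)*(1-q)*ml"
abbreviation "B00 \<equiv> (1-p)*(1-q)*(1-ml) + p*(1-q)*mh + (1-p)*q*ml"

lemma prio_trans_simps:
  "prio_trans p q mh ml (i, j) (Suc i, j) = P10"
  "prio_trans p q mh ml (i, j) (Suc i, Suc j) = P11"
  "prio_trans p q mh ml (Suc i, j) (Suc i, Suc j) = P01"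
  "prio_trans p q mh ml (Suc i, j) (i, Suc j) = Pm11"
  "prio_trans p q mh ml (Suc i, j) (i, j) = Pm10"
  "prio_trans p q mh ml (Suc i, j) (Suc i, j) = P00"
  "prio_trans p q mh ml (Suc i, Suc j) (Suc i, j) = 0"
  "prio_trans p q mh ml (0, j) (0, Suc j) = B01"
  "prio_trans p q mh ml (0, Suc j) (0, j) = B0m1"
  "prio_trans p q mh ml (0, Suc j) (0, Suc j) = B00"
  "prio_trans p q mh ml (0, 0) (0, 0) = (1-p)*(1-q) + p*(1-q)*mh + (1-p)*q*ml"
  by (simp_all add: prio_trans_def Let_def)

lemma balance_interior:
  "\<pi> (Suc i, Suc j) = P10*\<pi> (i, Suc j) + P11*\<pi> (i, j) + P01*\<pi> (Suc i, j) + Pm11*\<pi> (Suc (Suc i), j)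
     + Pm10*\<pi> (Suc (Suc i), Suc j) + P00*\<pi> (Suc i, Suc j)"
  using stationary_balance[OF stationary, of "Suc i" "Suc j"]
  by (simp add: prio_trans_simps sum.insert_if algebra_simps)

lemma balance_row_0:
  "\<pi> (Suc i, 0) = P10*\<pi> (i, 0) + Pm10*\<pi> (Suc (Suc i), 0) + P00*\<pi> (Suc i, 0)"
  using stationary_balance[OF stationary, of "Suc i" 0]
  by (simp add: prio_trans_simps sum.insert_if algebra_simps)

lemma balance_column_0:
  "\<pi> (0, Suc j) = B01*\<pi> (0, j) + Pm11*\<pi> (1, j) + Pm10*\<pi> (1, Suc j) + B00*\<pi> (0, Suc j)
     + B0m1*\<pi> (0, Suc (Suc j))"
  using stationary_balance[OF stationary, of 0 "Suc j"]
  by (simp add: prio_trans_simps sum.insert_if algebra_simps)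

lemma balance_origin:
  "\<pi> (0, 0) = ((1-p)*(1-q) + p*(1-q)*mh + (1-p)*q*ml)*\<pi> (0, 0) + Pm10*\<pi> (1, 0) + B0m1*\<pi> (0, 1)"
  using stationary_balance[OF stationary, of 0 0]
  by (simp add: prio_trans_simps sum.insert_if algebra_simps)

lemma pi_nonneg: "0 \<le> \<pi> s"
  using stationary unfolding is_stationary_def by blast

lemma pi_has_sum: "(\<pi> has_sum 1) UNIV"
  using stationary by (simp add: is_stationary_def)

definition prob_Q1 :: "nat \<Rightarrow> real" where "prob_Q1 i = (\<Sum>j. \<pi> (i, j))"
definition prob_Q2 :: "nat \<Rightarrow> real" where "prob_Q2 j = (\<Sum>i. \<pi> (i, j))"

lemma summable_pi_column: "summable (\<lambda>j. \<pi> (i, j))"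
  and prob_Q1_sums: "prob_Q1 sums 1"
  using nonneg_has_sum_marginal[OF pi_nonneg pi_has_sum] unfolding prob_Q1_def[abs_def] by auto

lemma summable_pi_row: "summable (\<lambda>i. \<pi> (i, j))"
  and prob_Q2_sums: "prob_Q2 sums 1"
proof -
  have "(\<pi> has_sum 1) (UNIV \<times> UNIV)" using pi_has_sum by simp
  then have "((\<lambda>(j, i). \<pi> (i, j)) has_sum 1) (UNIV \<times> UNIV)" using has_sum_swap by blast
  moreover have "0 \<le> (\<lambda>(j, i). \<pi> (i, j)) s" for s by (simp add: pi_nonneg split: prod.split)
  ultimately have "summable (\<lambda>i. \<pi> (i, j))" "(\<lambda>j. \<Sum>i. \<pi> (i, j)) sums 1"
    using nonneg_has_sum_marginal[of "\<lambda>(j, i). \<pi> (i, j)"] by simp_all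
  then show "summable (\<lambda>i. \<pi> (i, j))" "prob_Q2 sums 1" unfolding prob_Q2_def[abs_def] .
qed

lemma pi_column_sums: "(\<lambda>j. \<pi> (i, j)) sums prob_Q1 i"
  unfolding prob_Q1_def by (rule summable_sums[OF summable_pi_column])

lemma pi_row_sums: "(\<lambda>i. \<pi> (i, j)) sums prob_Q2 j"
  unfolding prob_Q2_def by (rule summable_sums[OF summable_pi_row])

abbreviation "X0 \<equiv> prio_x0 p q mh 0"
abbreviation "X1 \<equiv> prio_x1 p q mh 0"

lemma kernel_roots: "0 < X0" "X0 < 1" "1 < X1" "P10*(X0 + X1) = 1 - P00" "P10*X0*X1 = Pm10"
proof -
  define r where "r = sqrt (prio_Delta p q mh 0)"
  have P10_pos: "P10 > 0" and Pm10_pos: "Pm10 > 0" using p_pos p_lt_1 q_lt_1 mh_pos mh_lt_1 by simp_all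
  have "P00 < (1-p)*(1-q) + p*(1-q)" using p_pos p_lt_1 q_lt_1 mh_pos mh_lt_1
    by (intro add_strict_mono) (simp_all add: mult_strict_left_mono)
  then have "P00 < 1 - q" by (simp add: algebra_simps)
  then have P00_lt_1: "1 - P00 > 0" using q_pos by simp
  have Delta: "prio_Delta p q mh 0 = (1 - P00)\<^sup>2 - 4*P10*Pm10"
    and Delta': "prio_Delta p q mh 0 = (2*P10 - (1 - P00))\<^sup>2 + 4*P10*q"
    unfolding prio_Delta_def by (simp_all add: power2_eq_square algebra_simps)
  have "prio_Delta p q mh 0 > 0"
    unfolding Delta' using P10_pos q_pos by (simp add: add_nonneg_pos)
  have "r > \<bar>2*P10 - (1 - P00)\<bar>"
    unfolding r_def Delta' using P10_pos q_pos real_sqrt_less_mono[of "(2*P10 - (1 - P00))\<^sup>2"] by simp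
  moreover have "r < 1 - P00"
    unfolding r_def Delta using P10_pos Pm10_pos P00_lt_1 real_sqrt_less_mono[of _ "(1 - P00)\<^sup>2"] by simp
  moreover have r_sq: "r\<^sup>2 = (1 - P00)\<^sup>2 - 4*P10*Pm10"
    using \<open>prio_Delta p q mh 0 > 0\<close> unfolding r_def Delta[symmetric] by simp
  moreover have "X0 = (1 - P00 - r) / (2*P10)" "X1 = (1 - P00 + r) / (2*P10)"
    unfolding prio_x0_def prio_x1_def r_def by (simp_all add: algebra_simps)
  then have X0: "2*P10*X0 = 1 - P00 - r" and X1: "2*P10*X1 = 1 - P00 + r"
    using p_pos q_lt_1 mh_lt_1 by simp_all
  ultimately show "0 < X0" "X0 < 1" "1 < X1"
    using quadratic_formula_roots_separated[OF P10_pos] by blast+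
  have "P10 \<noteq> 0" using p_pos q_lt_1 mh_lt_1 by simp
  from vieta_from_quadratic_formula[OF this r_sq X0 X1]
  show "P10*(X0 + X1) = 1 - P00" "P10*X0*X1 = Pm10" .
qed

lemma reciprocal_kernel_root:
  assumes "X = X0 \<or> X = X1"
  shows "Pm10*(1/X)\<^sup>2 - (1 - P00)*(1/X) + P10 = 0"
proof -
  have "X \<noteq> 0" using assms kernel_roots(1,3) by auto
  have "Pm10*(1/X)\<^sup>2 - (1 - P00)*(1/X) + P10 = P10*(X - X0)*(X - X1) / X\<^sup>2"
    unfolding kernel_roots(4,5)[symmetric] using \<open>X \<noteq> 0\<close> by (simp add: field_simps power2_eq_square)
  also have "\<dots> = 0" using assms by auto
  finally show ?thesis .
qed

lemma row_0_geometric: "\<pi> (n, 0) = \<pi> (0, 0) * (1/X1)^n"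
proof (rule decaying_solution_of_linear_recurrence)
  show "Pm10 * \<pi> (Suc (Suc n), 0) = (1 - P00) * \<pi> (Suc n, 0) - P10 * \<pi> (n, 0)" for n
    using balance_row_0[of n] by (simp add: algebra_simps)
  show "Pm10*(1/X1)\<^sup>2 - (1 - P00)*(1/X1) + P10 = 0" "Pm10*(1/X0)\<^sup>2 - (1 - P00)*(1/X0) + P10 = 0"
    by (rule reciprocal_kernel_root, simp)+
  show "Pm10 \<noteq> 0" using p_lt_1 q_lt_1 mh_pos by simp
  show "\<bar>1/X1\<bar> < 1" "1 < 1/X0" using kernel_roots(1-3) by simp_all
  show "(\<lambda>n. \<pi> (n, 0)) \<longlonglongrightarrow> 0" by (rule summable_LIMSEQ_zero[OF summable_pi_row])
qed

lemma gen_phi_sums: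
  fixes x :: complex
  assumes "cmod x \<le> 1"
  shows "(\<lambda>i. complex_of_real (\<pi> (i, j)) * x^i) sums gen_phi \<pi> j x"
proof -
  have "norm (complex_of_real (\<pi> (i, j)) * x^i) \<le> \<pi> (i, j)" for i
    using pi_nonneg[of "(i, j)"] assms
    by (simp add: norm_mult norm_power mult_left_le power_le_one)
  then have "summable (\<lambda>i. complex_of_real (\<pi> (i, j)) * x^i)"
    by (rule summable_comparison_test'[OF summable_pi_row, of 0])
  then show ?thesis unfolding gen_phi_def by (rule summable_sums)
qed

lemma gen_phi_0:
  fixes x :: complex
  assumes "cmod x \<le> 1"
  shows "gen_phi \<pi> 0 x = \<pi> (0, 0) / (1 - (1 / X1) * x)"
proof -
  have "norm (complex_of_real (1/X1) * x) = cmod x / X1"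
    using kernel_roots(3) by (simp add: norm_divide)
  also have "\<dots> < 1" using assms kernel_roots(3) by (simp add: divide_less_eq)
  finally have "norm (complex_of_real (1/X1) * x) < 1" .
  moreover have "complex_of_real (\<pi> (0, 0)) * (complex_of_real (1/X1) * x)^i = complex_of_real (\<pi> (i, 0)) * x^i" for i
    by (subst row_0_geometric[of i]) (simp add: power_mult_distrib power_divide)
  ultimately have "(\<lambda>i. complex_of_real (\<pi> (i, 0)) * x^i) sums (\<pi> (0, 0) / (1 - (1 / X1) * x))"
    using sums_mult[OF geometric_sums, of "complex_of_real (1/X1) * x" "complex_of_real (\<pi> (0, 0))"]
    by simp
  with gen_phi_sums[OF assms, of 0] show ?thesis by (simp add: sums_unique2)
qed

lemma kernel_factorization:
  "of_real P10 * z\<^sup>2 - of_real (1 - P00) * z + of_real Pm10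
     = of_real P10 * (z - of_real X0) * (z - of_real X1)" for z :: "'a::real_field"
proof -
  have "of_real (1 - P00) = (of_real P10 * (of_real X0 + of_real X1) :: 'a)"
    and "of_real Pm10 = (of_real P10 * of_real X0 * of_real X1 :: 'a)"
    by (simp_all only: kernel_roots(4,5) flip: of_real_add of_real_mult)
  moreover have "c*z\<^sup>2 - c*(u + w)*z + c*u*w = c*(z - u)*(z - w)" for c u w :: 'a
    by algebra
  ultimately show ?thesis by (simp only:)
qed

lemma kernel_equation:
  fixes x :: "'a::real_normed_field"
  assumes F: "(\<lambda>i. of_real (\<pi> (i, Suc j)) * x^i) sums F"
    and G: "(\<lambda>i. of_real (\<pi> (i, j)) * x^i) sums G"
  shows "(of_real P10 * x\<^sup>2 - of_real (1 - P00) * x + of_real Pm10) * F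
       = - (of_real P11 * x\<^sup>2 + of_real P01 * x + of_real Pm11) * G
         + of_real (Pm11 * \<pi> (0, j) + Pm10 * \<pi> (0, Suc j))
         + of_real ((P01 - B01) * \<pi> (0, j) + (P00 - B00) * \<pi> (0, Suc j) - B0m1 * \<pi> (0, Suc (Suc j))) * x"
  by (rule power_series_kernel_equation[OF F G balance_interior balance_column_0])

lemma gen_phi_Suc:
  fixes x :: complex
  assumes x: "cmod x \<le> 1" "x \<noteq> X0"
  shows "gen_phi \<pi> (Suc j) x =
      ((((1 - p)*(1 - q)*(ml - mh) - (1 - p)*q*ml) * \<pi> (0, Suc j) - (1 - p)*(1 - q)*ml * \<pi> (0, Suc (Suc j))
          + (1 - p)*q*(ml - mh) * \<pi> (0, j))
        - q*((1 - p)*(1 - mh) + p*mh) * gen_phi \<pi> j X0) / (p*(1 - q)*(1 - mh)) / (x - X1)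
      - q * gen_phi \<pi> j X0 * (x + X0) / ((1 - q)*(x - X1))
      - q*(p*x + (1 - p))*((1 - mh)*x + mh) / (p*(1 - q)*(1 - mh)*(x - X1))
        * ((gen_phi \<pi> j x - gen_phi \<pi> j X0) / (x - X0))"
proof -
  have X0_in_disc: "cmod (complex_of_real X0) \<le> 1" using kernel_roots(1,2) by simp
  note K = kernel_equation[OF gen_phi_sums[OF x(1), of "Suc j"] gen_phi_sums[OF x(1), of j]]
    and K0 = kernel_equation[OF gen_phi_sums[OF X0_in_disc, of "Suc j"] gen_phi_sums[OF X0_in_disc, of j]]
  have "x \<noteq> X1" using x(1) kernel_roots(3) by (auto simp: norm_of_real)
  moreover have "complex_of_real P10 \<noteq> 0" using p_pos q_lt_1 mh_lt_1 by simp
  ultimately have "gen_phi \<pi> (Suc j) x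
      = (((P01 - B01) * \<pi> (0, j) + (P00 - B00) * \<pi> (0, Suc j) - B0m1 * \<pi> (0, Suc (Suc j)))
          - P01 * gen_phi \<pi> j X0) / P10 / (x - X1)
        - complex_of_real P11 / of_real P10 * gen_phi \<pi> j X0 * (x + X0) / (x - X1)
        - (of_real P11 * x\<^sup>2 + of_real P01 * x + of_real Pm11) / (P10 * (x - X1))
          * ((gen_phi \<pi> j x - gen_phi \<pi> j X0) / (x - X0))"
    using kernel_root_elimination[OF K[unfolded kernel_factorization] K0[unfolded kernel_factorization diff_self mult_zero_right mult_zero_left]] x(2)
    by blast
  also have "complex_of_real P11 / of_real P10 = q / (1 - q)"
  proof -
    have "p*(1-mh) \<noteq> 0" using p_pos mh_lt_1 by simp
    have "P11 / P10 = (q*(p*(1-mh))) / ((1-q)*(p*(1-mh)))" by (simp only: mult_ac)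
    also have "\<dots> = q / (1 - q)" using \<open>p*(1-mh) \<noteq> 0\<close> by (rule nonzero_mult_divide_mult_cancel_right)
    finally have "P11 / P10 = q / (1 - q)" .
    then show ?thesis by (simp only: of_real_divide[symmetric])
  qed
  also have "complex_of_real P11 * x\<^sup>2 + of_real P01 * x + of_real Pm11 = q*(p*x + (1 - p))*((1 - mh)*x + mh)"
    by (simp add: algebra_simps power2_eq_square)
  also have "(P01 - B01) * \<pi> (0, j) + (P00 - B00) * \<pi> (0, Suc j) - B0m1 * \<pi> (0, Suc (Suc j))
      = ((1 - p)*(1 - q)*(ml - mh) - (1 - p)*q*ml) * \<pi> (0, Suc j) - (1 - p)*(1 - q)*ml * \<pi> (0, Suc (Suc j))
        + (1 - p)*q*(ml - mh) * \<pi> (0, j)"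
    by (simp add: algebra_simps)
  also have "P01 = q*((1 - p)*(1 - mh) + p*mh)"
    by (simp add: algebra_simps)
  finally show ?thesis by (simp add: mult.assoc)
qed

lemma pi_column_Suc_sums: "(\<lambda>j. \<pi> (i, Suc j)) sums (prob_Q1 i - \<pi> (i, 0))"
  using pi_column_sums[of i] by (subst sums_Suc_iff) simp

lemma prob_Q1_balance_0: "p*(1-mh) * prob_Q1 0 = (1-p)*mh * prob_Q1 1"
proof -
  have shift2: "(\<lambda>j. \<pi> (0, Suc (Suc j))) sums (prob_Q1 0 - \<pi> (0, 0) - \<pi> (0, 1))"
    using pi_column_Suc_sums[of 0] by (subst sums_Suc_iff[where f="\<lambda>j. \<pi> (0, Suc j)"]) simp
  have "(\<lambda>j. \<pi> (0, Suc j)) sums (B01 * prob_Q1 0 + Pm11 * prob_Q1 1 + Pm10 * (prob_Q1 1 - \<pi> (1, 0))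
      + B00 * (prob_Q1 0 - \<pi> (0, 0)) + B0m1 * (prob_Q1 0 - \<pi> (0, 0) - \<pi> (0, 1)))"
    by (subst balance_column_0) (intro sums_add sums_mult pi_column_sums pi_column_Suc_sums shift2)
  with pi_column_Suc_sums[of 0] balance_origin show ?thesis
    by (auto dest: sums_unique2 simp: algebra_simps)
qed

lemma prob_Q1_balance_Suc:
  "(p*(1-mh) + (1-p)*mh) * prob_Q1 (Suc i) = p*(1-mh) * prob_Q1 i + (1-p)*mh * prob_Q1 (Suc (Suc i))"
proof -
  have "(\<lambda>j. \<pi> (Suc i, Suc j)) sums (P10 * (prob_Q1 i - \<pi> (i, 0)) + P11 * prob_Q1 i + P01 * prob_Q1 (Suc i)
      + Pm11 * prob_Q1 (Suc (Suc i)) + Pm10 * (prob_Q1 (Suc (Suc i)) - \<pi> (Suc (Suc i), 0))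
      + P00 * (prob_Q1 (Suc i) - \<pi> (Suc i, 0)))"
    by (subst balance_interior) (intro sums_add sums_mult pi_column_sums pi_column_Suc_sums)
  with pi_column_Suc_sums[of "Suc i"] balance_row_0[of i] show ?thesis
    by (auto dest: sums_unique2 simp: algebra_simps)
qed


lemma prob_Q1_balance: "p*(1-mh) * prob_Q1 i = (1-p)*mh * prob_Q1 (Suc i)"
proof (induction i)
  case 0
  show ?case by (simp add: prob_Q1_balance_0)
next
  case (Suc i)
  with prob_Q1_balance_Suc[of i] show ?case by (simp add: algebra_simps)
qed

lemma prob_Q1_0: "prob_Q1 0 = 1 - p*(1-mh) / ((1-p)*mh)"
proof -
  define r where "r = p*(1-mh) / ((1-p)*mh)"
  have "(1-p)*mh > 0" using p_lt_1 mh_pos by simp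
  have "p / mh < 1" using load_lt_1 divide_pos_pos[OF q_pos ml_pos] by linarith
  then have "p < mh" using mh_pos by (simp add: divide_less_eq)
  have "0 \<le> r" "r < 1" using \<open>(1-p)*mh > 0\<close> \<open>p < mh\<close> p_pos mh_lt_1 by (simp_all add: r_def field_simps)
  have "prob_Q1 (Suc i) = r * prob_Q1 i" for i
  proof -
    have "(1-p)*mh * (r * prob_Q1 i) = (1-p)*mh * prob_Q1 (Suc i)"
      using prob_Q1_balance[of i] \<open>(1-p)*mh > 0\<close> unfolding r_def by simp
    then show ?thesis using p_lt_1 mh_pos by simp
  qed
  then have "prob_Q1 i = prob_Q1 0 * r^i" for i by (induction i) simp_all
  then have "(\<lambda>i. prob_Q1 0 * r^i) = prob_Q1" by (intro ext) (rule sym)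
  then have "prob_Q1 sums (prob_Q1 0 * (1 / (1 - r)))"
    using sums_mult[OF geometric_sums, of r "prob_Q1 0"] \<open>0 \<le> r\<close> \<open>r < 1\<close> by simp
  with prob_Q1_sums have "prob_Q1 0 / (1 - r) = 1" using sums_unique2 by fastforce
  then show ?thesis using \<open>r < 1\<close> by (simp add: r_def field_simps)
qed

text \<open>Net probability flow from level j to level j + 1 of the low-priority queue.\<close>

definition low_cut_flux :: "nat \<Rightarrow> real" where
  "low_cut_flux j = q * prob_Q2 j - (1-p)*ml * (q * \<pi> (0, j) + (1-q) * \<pi> (0, Suc j))"

lemma low_cut_flux_Suc: "low_cut_flux (Suc j) = low_cut_flux j"
proof -
  have "(\<lambda>i. of_real (\<pi> (i, j)) * (1::real)^i) sums prob_Q2 j" for j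
    using pi_row_sums by simp
  from kernel_equation[OF this[of "Suc j"] this[of j]] show ?thesis
    unfolding low_cut_flux_def by (simp add: algebra_simps)
qed

lemma low_cut_flux_eq_0: "low_cut_flux j = 0"
proof -
  have const: "low_cut_flux j = low_cut_flux 0" for j
    by (induction j) (simp_all add: low_cut_flux_Suc)
  have "prob_Q2 \<longlonglongrightarrow> 0" by (rule summable_LIMSEQ_zero[OF sums_summable[OF prob_Q2_sums]])
  moreover have "(\<lambda>j. \<pi> (0, j)) \<longlonglongrightarrow> 0" by (rule summable_LIMSEQ_zero[OF summable_pi_column])
  moreover from this have "(\<lambda>j. \<pi> (0, Suc j)) \<longlonglongrightarrow> 0" by (rule LIMSEQ_Suc)
  ultimately have "low_cut_flux \<longlonglongrightarrow> q * 0 - (1-p)*ml * (q * 0 + (1-q) * 0)"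
    unfolding low_cut_flux_def[abs_def] by (intro tendsto_intros)
  moreover have "(\<lambda>_. low_cut_flux 0) = low_cut_flux" by (rule ext) (rule const[symmetric])
  ultimately have "(\<lambda>_. low_cut_flux 0) \<longlonglongrightarrow> 0" by simp
  then show ?thesis by (simp add: const[of j] LIMSEQ_const_iff)
qed

lemma pi_00: "\<pi> (0, 0) = (1 - (p / mh + q / ml)) / ((1 - p) * (1 - q))"
proof -
  have "low_cut_flux sums (q * 1 - (1-p)*ml * (q * prob_Q1 0 + (1-q) * (prob_Q1 0 - \<pi> (0, 0))))"
    unfolding low_cut_flux_def[abs_def]
    by (intro sums_diff sums_mult sums_add prob_Q2_sums pi_column_sums pi_column_Suc_sums)
  moreover have "low_cut_flux sums 0"
    using sums_zero by (simp add: low_cut_flux_eq_0[abs_def])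
  ultimately have "q = (1-p)*ml * (prob_Q1 0 - (1-q) * \<pi> (0, 0))"
    using sums_unique2 by (fastforce simp: algebra_simps)
  then have "(1-p)*(1-q)*ml * \<pi> (0, 0) = (1-p)*ml * prob_Q1 0 - q" by (simp add: algebra_simps)
  also have "\<dots> = ml * (1 - (p / mh + q / ml))"
    unfolding prob_Q1_0 using p_lt_1 mh_pos ml_pos by (simp add: field_simps)
  finally have "ml * ((1-p)*(1-q) * \<pi> (0, 0)) = ml * (1 - (p / mh + q / ml))" by (simp add: mult_ac)
  then have "(1-p)*(1-q) * \<pi> (0, 0) = 1 - (p / mh + q / ml)" using ml_pos by simp
  then show ?thesis using p_lt_1 q_lt_1 by (simp add: eq_divide_eq mult.commute)
qed

end

theorem lemma3p2:
  fixes p q mh ml :: real and \<pi> :: "nat \<times> nat \<Rightarrow> real"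
  assumes "0 < p" "p < 1" "0 < q" "q < 1" "0 < mh" "mh < 1" "0 < ml" "ml < 1"
    and "p + q + mh + ml = 1"
    and "p / mh + q / ml < 1"
    and "is_stationary (prio_trans p q mh ml) \<pi>"
  shows
    "(\<forall>x::complex. cmod x \<le> 1 \<longrightarrow>
        gen_phi \<pi> 0 x = \<pi> (0, 0) / (1 - (1 / prio_x1 p q mh 0) * x))
     \<and> (\<forall>j::nat. j \<ge> 1 \<longrightarrow> (\<forall>x::complex. cmod x \<le> 1 \<and> x \<noteq> prio_x0 p q mh 0 \<longrightarrow>
        (let x0 = complex_of_real (prio_x0 p q mh 0);
             x1 = complex_of_real (prio_x1 p q mh 0);
             a = ((((1 - p) * (1 - q) * (ml - mh) - (1 - p) * q * ml) * \<pi> (0, j)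
                   - (1 - p) * (1 - q) * ml * \<pi> (0, j + 1)
                   + (1 - p) * q * (ml - mh) * \<pi> (0, j - 1))
                  - q * ((1 - p) * (1 - mh) + p * mh) * gen_phi \<pi> (j - 1) x0)
                 / (p * (1 - q) * (1 - mh))
         in gen_phi \<pi> j x =
              a / (x - x1)
              - q * gen_phi \<pi> (j - 1) x0 * (x + x0) / ((1 - q) * (x - x1))
              - q * (p * x + (1 - p)) * ((1 - mh) * x + mh) / (p * (1 - q) * (1 - mh) * (x - x1))
                * ((gen_phi \<pi> (j - 1) x - gen_phi \<pi> (j - 1) x0) / (x - x0)))))
     \<and> \<pi> (0, 0) = (1 - (p / mh + q / ml)) / ((1 - p) * (1 - q))"
proof -
  interpret prio_queue p q mh ml \<pi> using assms by unfold_locales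
  show ?thesis by (auto simp: Let_def gen_phi_0 gen_phi_Suc pi_00 dest!: Suc_le_D)
qed

end
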